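(* Let $G_{\lambda,k}$ be a skeleton of a graph $G$ such that $G_{(\lambda,k)_{(2,2)}}$ contains an $M$-fat $H$ minor for some $M\ge6$. Then $G_{\lambda,k}$ contains an $(M+1)$-fat $H$ minor.
   Context: All graphs are connected (and unbounded); $d$ is the graph metric. Sets $X,Y$ are $r$-disjoint if $d(a,b)>r$ for all $a\in X,b\in Y$; $X$ is $k$-connected if any two of its points are joined by a finite sequence in $X$ with consecutive distances $\le k$. $H$ is an $M$-fat minor of a graph $\Gamma$ if there are connected subgraphs $B_v$ ($v\in V(H)$) and paths $P_e$ ($e\in E(H)$), $P_e$ joining $B_u$ to $B_v$ for $e=uv$, any two of which are $M$-disjoint unless they correspond to an incident vertex–edge pair of $H$. Skeleton $\Gamma_{\lambda,k}$ of a connected graph $\Gamma$ (root $x_0$, scale $\lambda\ge1$, connectivity $k\ge1$): layers $A_{N,\lambda}=\{x: N\lambda<d(x,x_0)\le(N+1)\lambda\}$, $N\in\mathbb Z$; blocks are maximal $k$-connected subsets of layers; $\Gamma_{\lambda,k}$ has a vertex per block and an edge between two blocks iff an edge of $\Gamma$ joins them. $G_{(\lambda,k)_{(2,2)}}$ is the $(2,2)$-skeleton of the graph $G_{\lambda,k}$, rooted at the block containing the root of $G$. *)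

theory Defs
  imports Complex_Main
begin

definition graph :: "'a set \<Rightarrow> ('a \<Rightarrow> 'a \<Rightarrow> bool) \<Rightarrow> bool" where
  "graph V E \<longleftrightarrow> (\<forall>x y. E x y \<longrightarrow> x \<in> V \<and> y \<in> V) \<and> (\<forall>x y. E x y \<longrightarrow> E y x) \<and> (\<forall>x. \<not> E x x)"

definition walk :: "'a set \<Rightarrow> ('a \<Rightarrow> 'a \<Rightarrow> bool) \<Rightarrow> 'a list \<Rightarrow> bool" where
  "walk V E p \<longleftrightarrow> p \<noteq> [] \<and> set p \<subseteq> V \<and> (\<forall>i < length p - 1. E (p ! i) (p ! (i + 1)))"

text \<open>Connectedness of (the subgraph induced on) V.\<close>
definition connected_graph :: "'a set \<Rightarrow> ('a \<Rightarrow> 'a \<Rightarrow> bool) \<Rightarrow> bool" where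
  "connected_graph V E \<longleftrightarrow> V \<noteq> {} \<and>
     (\<forall>x\<in>V. \<forall>y\<in>V. \<exists>p. walk V E p \<and> hd p = x \<and> last p = y)"

definition gdist :: "'a set \<Rightarrow> ('a \<Rightarrow> 'a \<Rightarrow> bool) \<Rightarrow> 'a \<Rightarrow> 'a \<Rightarrow> nat" where
  "gdist V E x y = (LEAST n. \<exists>p. walk V E p \<and> hd p = x \<and> last p = y \<and> length p = n + 1)"

definition unbounded_graph :: "'a set \<Rightarrow> ('a \<Rightarrow> 'a \<Rightarrow> bool) \<Rightarrow> 'a \<Rightarrow> bool" where
  "unbounded_graph V E x0 \<longleftrightarrow> (\<forall>n::nat. \<exists>x\<in>V. gdist V E x0 x > n)"

definition r_disjoint :: "'a set \<Rightarrow> ('a \<Rightarrow> 'a \<Rightarrow> bool) \<Rightarrow> real \<Rightarrow> 'a set \<Rightarrow> 'a set \<Rightarrow> bool" where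
  "r_disjoint V E r X Y \<longleftrightarrow> (\<forall>a\<in>X. \<forall>b\<in>Y. real (gdist V E a b) > r)"

definition k_connected :: "'a set \<Rightarrow> ('a \<Rightarrow> 'a \<Rightarrow> bool) \<Rightarrow> real \<Rightarrow> 'a set \<Rightarrow> bool" where
  "k_connected V E k X \<longleftrightarrow> (\<forall>x\<in>X. \<forall>y\<in>X. \<exists>p. p \<noteq> [] \<and> hd p = x \<and> last p = y \<and> set p \<subseteq> X \<and>
       (\<forall>i < length p - 1. real (gdist V E (p ! i) (p ! (i + 1))) \<le> k))"

definition simple_graph_sets :: "'b set \<Rightarrow> 'b set set \<Rightarrow> bool" where
  "simple_graph_sets VH EH \<longleftrightarrow> (\<forall>e\<in>EH. \<exists>u v. u \<noteq> v \<and> u \<in> VH \<and> v \<in> VH \<and> e = {u, v})"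

definition fat_minor :: "'a set \<Rightarrow> ('a \<Rightarrow> 'a \<Rightarrow> bool) \<Rightarrow> real \<Rightarrow> 'b set \<Rightarrow> 'b set set \<Rightarrow> bool" where
  "fat_minor V E M VH EH \<longleftrightarrow> (\<exists>(B :: 'b \<Rightarrow> 'a set) (P :: 'b set \<Rightarrow> 'a list).
     (\<forall>v\<in>VH. B v \<subseteq> V \<and> connected_graph (B v) E) \<and>
     (\<forall>e\<in>EH. walk V E (P e) \<and> distinct (P e) \<and>
        (\<exists>u v. e = {u, v} \<and> hd (P e) \<in> B u \<and> last (P e) \<in> B v)) \<and>
     (\<forall>u\<in>VH. \<forall>v\<in>VH. u \<noteq> v \<longrightarrow> r_disjoint V E M (B u) (B v)) \<and>
     (\<forall>e\<in>EH. \<forall>e'\<in>EH. e \<noteq> e' \<longrightarrow> r_disjoint V E M (set (P e)) (set (P e'))) \<and>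
     (\<forall>v\<in>VH. \<forall>e\<in>EH. v \<notin> e \<longrightarrow> r_disjoint V E M (B v) (set (P e))))"

definition layer :: "'a set \<Rightarrow> ('a \<Rightarrow> 'a \<Rightarrow> bool) \<Rightarrow> 'a \<Rightarrow> real \<Rightarrow> int \<Rightarrow> 'a set" where
  "layer V E x0 lam N = {x\<in>V. real_of_int N * lam < real (gdist V E x x0) \<and>
                                real (gdist V E x x0) \<le> (real_of_int N + 1) * lam}"

definition is_block :: "'a set \<Rightarrow> ('a \<Rightarrow> 'a \<Rightarrow> bool) \<Rightarrow> 'a \<Rightarrow> real \<Rightarrow> real \<Rightarrow> 'a set \<Rightarrow> bool" where
  "is_block V E x0 lam k S \<longleftrightarrow> (\<exists>N. S \<noteq> {} \<and> S \<subseteq> layer V E x0 lam N \<and> k_connected V E k S \<and>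
      (\<forall>T. S \<subseteq> T \<and> T \<subseteq> layer V E x0 lam N \<and> k_connected V E k T \<longrightarrow> T = S))"

definition skel_V :: "'a set \<Rightarrow> ('a \<Rightarrow> 'a \<Rightarrow> bool) \<Rightarrow> 'a \<Rightarrow> real \<Rightarrow> real \<Rightarrow> 'a set set" where
  "skel_V V E x0 lam k = {S. is_block V E x0 lam k S}"

definition skel_E :: "'a set \<Rightarrow> ('a \<Rightarrow> 'a \<Rightarrow> bool) \<Rightarrow> 'a \<Rightarrow> real \<Rightarrow> real \<Rightarrow> 'a set \<Rightarrow> 'a set \<Rightarrow> bool" where
  "skel_E V E x0 lam k S S' \<longleftrightarrow> S \<in> skel_V V E x0 lam k \<and> S' \<in> skel_V V E x0 lam k \<and> S \<noteq> S' \<and>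
      (\<exists>x\<in>S. \<exists>y\<in>S'. E x y)"

definition skel_root :: "'a set \<Rightarrow> ('a \<Rightarrow> 'a \<Rightarrow> bool) \<Rightarrow> 'a \<Rightarrow> real \<Rightarrow> real \<Rightarrow> 'a set" where
  "skel_root V E x0 lam k = (THE S. S \<in> skel_V V E x0 lam k \<and> x0 \<in> S)"

end

theory Submission
  imports Defs "HOL-Library.Transitive_Closure_Table"
begin

(*
  Write \<Gamma> for the skeleton G_{\<lambda>,k} and \<Gamma>' for its (2,2)-skeleton. Every vertex x of \<Gamma>
  lies in exactly one block of \<Gamma>' (its component in its layer). Along an edge the distance
  to the root changes by at most 1 while layers of \<Gamma>' have width 2, so of any three
  consecutive vertices of a walk two lie in a common layer and, being at distance at most 2,
  in a common block. Hence walks in \<Gamma> project to walks in \<Gamma>' of about half the length: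
  2 d'(A, B) \<le> d(a, b) + 1 for a \<in> A and b \<in> B.

  Conversely, as blocks of \<Gamma>' are 2-connected, a connected set of blocks becomes connected in
  \<Gamma> after adding the closed 1-neighbourhood of its union. Replacing the branch sets and paths
  of an M-fat minor in \<Gamma>' by these neighbourhoods (and by paths inside them) gives sets at
  distance > 2M - 3 \<ge> M + 1 in \<Gamma>, so M \<ge> 4 already suffices.
*)

section \<open>Walks as paths of the induced relation\<close>

definition induced :: "('a \<Rightarrow> 'a \<Rightarrow> bool) \<Rightarrow> 'a set \<Rightarrow> 'a \<Rightarrow> 'a \<Rightarrow> bool" where
  "induced R X a b \<longleftrightarrow> a \<in> X \<and> b \<in> X \<and> R a b"

lemma induced_mono: "X \<subseteq> Y \<Longrightarrow> induced R X \<le> induced R Y"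
  by (auto simp: induced_def)

lemma rtrancl_path_Nil_iff [simp]: "rtrancl_path r x [] y \<longleftrightarrow> x = y"
  by (auto elim: rtrancl_path.cases intro: rtrancl_path.base)

lemma rtrancl_path_Cons_iff [simp]:
  "rtrancl_path r x (z # zs) y \<longleftrightarrow> r x z \<and> rtrancl_path r z zs y"
  by (auto elim: rtrancl_path.cases intro: rtrancl_path.step)

lemma rtrancl_path_sym:
  assumes "symp r" and "rtrancl_path r x xs y"
  obtains ys where "rtrancl_path r y ys x" and "length ys = length xs"
  using assms(2)
proof (induction arbitrary: thesis)
  case (base x)
  then show ?case by simp
next
  case (step x z zs y)
  obtain ys where ys: "rtrancl_path r y ys z" "length ys = length zs"
    using step.IH by blast
  have "rtrancl_path r z [x] x"
    using \<open>symp r\<close> \<open>r x z\<close> by (simp add: sympD)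
  with ys(1) have "rtrancl_path r y (ys @ [x]) x"
    by (rule rtrancl_path_trans)
  then show ?case
    by (rule step.prems) (simp add: ys(2))
qed

lemma walk_Cons: "walk X R (x # xs) \<longleftrightarrow> x \<in> X \<and> (xs = [] \<or> R x (hd xs) \<and> walk X R xs)"
  by (cases xs) (auto simp: walk_def All_less_Suc2)

lemma walk_iff_rtrancl_path:
  "walk X R (x # xs) \<and> last (x # xs) = y \<longleftrightarrow> x \<in> X \<and> rtrancl_path (induced R X) x xs y"
proof (induction xs arbitrary: x)
  case Nil
  then show ?case by (auto simp: walk_def)
next
  case (Cons z zs)
  then show ?case by (auto simp: walk_Cons induced_def)
qed

lemma ex_walk_iff_rtrancl_path:
  assumes "x \<in> X"
  shows "(\<exists>p. walk X R p \<and> hd p = x \<and> last p = y \<and> P (length p)) \<longleftrightarrow>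
         (\<exists>xs. rtrancl_path (induced R X) x xs y \<and> P (Suc (length xs)))"
proof -
  have "(\<exists>p. walk X R p \<and> hd p = x \<and> last p = y \<and> P (length p)) \<longleftrightarrow>
        (\<exists>xs. walk X R (x # xs) \<and> last (x # xs) = y \<and> P (Suc (length xs)))"
  proof
    assume "\<exists>p. walk X R p \<and> hd p = x \<and> last p = y \<and> P (length p)"
    then obtain p where "walk X R p" "hd p = x" "last p = y" "P (length p)" by blast
    then show "\<exists>xs. walk X R (x # xs) \<and> last (x # xs) = y \<and> P (Suc (length xs))"
      by (cases p) (auto simp: walk_def)
  next
    assume "\<exists>xs. walk X R (x # xs) \<and> last (x # xs) = y \<and> P (Suc (length xs))"
    then obtain xs where "walk X R (x # xs)" "last (x # xs) = y" "P (Suc (length xs))" by blast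
    then show "\<exists>p. walk X R p \<and> hd p = x \<and> last p = y \<and> P (length p)"
      by (intro exI[of _ "x # xs"]) simp
  qed
  also have "\<dots> \<longleftrightarrow> (\<exists>xs. rtrancl_path (induced R X) x xs y \<and> P (Suc (length xs)))"
    unfolding conj_assoc[symmetric] walk_iff_rtrancl_path using assms by simp
  finally show ?thesis .
qed

lemma ex_walk_iff_rtranclp:
  "x \<in> X \<Longrightarrow> (\<exists>p. walk X R p \<and> hd p = x \<and> last p = y) \<longleftrightarrow> (induced R X)\<^sup>*\<^sup>* x y"
  using ex_walk_iff_rtrancl_path[where P = "\<lambda>_. True"] by (simp add: rtranclp_eq_rtrancl_path)

section \<open>Connected components of a relation\<close>

definition rel_connected :: "('a \<Rightarrow> 'a \<Rightarrow> bool) \<Rightarrow> 'a set \<Rightarrow> bool" where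
  "rel_connected R S \<longleftrightarrow> (\<forall>x\<in>S. \<forall>y\<in>S. (induced R S)\<^sup>*\<^sup>* x y)"

lemma k_connected_iff_rel_connected:
  "k_connected V E k S \<longleftrightarrow> rel_connected (\<lambda>a b. real (gdist V E a b) \<le> k) S"
  unfolding k_connected_def rel_connected_def
  by (simp add: ex_walk_iff_rtranclp[symmetric] walk_def conj_commute conj_left_commute)

definition rel_component :: "('a \<Rightarrow> 'a \<Rightarrow> bool) \<Rightarrow> 'a set \<Rightarrow> 'a \<Rightarrow> 'a set" where
  "rel_component R L x = {y. (induced R L)\<^sup>*\<^sup>* x y}"

lemma rel_component_subset: "x \<in> L \<Longrightarrow> rel_component R L x \<subseteq> L"
  by (auto simp: rel_component_def induced_def elim: rtranclp.cases)

lemma rel_connected_rel_component: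
  assumes sym: "\<And>a b. a \<in> L \<Longrightarrow> b \<in> L \<Longrightarrow> R a b \<Longrightarrow> R b a" and "x \<in> L"
  shows "rel_connected R (rel_component R L x)"
proof -
  let ?C = "rel_component R L x"
  have from_x: "(induced R ?C)\<^sup>*\<^sup>* x y" if "(induced R L)\<^sup>*\<^sup>* x y" for y
    using that
  proof (induction rule: rtranclp_induct)
    case (step y z)
    have "(induced R L)\<^sup>*\<^sup>* x z"
      using step.hyps by (rule rtranclp.rtrancl_into_rtrancl)
    with step.hyps have "induced R ?C y z"
      by (auto simp: rel_component_def induced_def)
    with step.IH show ?case by simp
  qed simp
  have "?C \<subseteq> L"
    using \<open>x \<in> L\<close> by (rule rel_component_subset)
  with sym have "symp (induced R ?C)"
    unfolding symp_def induced_def by blast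
  then have to_x: "(induced R ?C)\<^sup>*\<^sup>* y x" if "y \<in> ?C" for y
    using from_x that by (simp add: rel_component_def sympD[OF symp_rtranclp])
  show ?thesis
    unfolding rel_connected_def
  proof (intro ballI)
    fix y z assume "y \<in> ?C" "z \<in> ?C"
    then have "(induced R L)\<^sup>*\<^sup>* x z"
      by (simp add: rel_component_def)
    then show "(induced R ?C)\<^sup>*\<^sup>* y z"
      by (rule rtranclp_trans[OF to_x[OF \<open>y \<in> ?C\<close>] from_x])
  qed
qed

lemma rel_connected_subset_rel_component:
  assumes "rel_connected R T" "T \<subseteq> L" "x \<in> T"
  shows "T \<subseteq> rel_component R L x"
proof
  fix y assume "y \<in> T"
  then have "(induced R T)\<^sup>*\<^sup>* x y"
    using assms(1,3) by (simp add: rel_connected_def)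
  then show "y \<in> rel_component R L x"
    using rtranclp_mono[OF induced_mono[OF assms(2)]] by (auto simp: rel_component_def)
qed

lemma maximal_rel_connected_iff:
  assumes sym: "\<And>a b. a \<in> L \<Longrightarrow> b \<in> L \<Longrightarrow> R a b \<Longrightarrow> R b a" and "x \<in> S"
  shows "S \<subseteq> L \<and> rel_connected R S \<and> (\<forall>T. S \<subseteq> T \<and> T \<subseteq> L \<and> rel_connected R T \<longrightarrow> T = S)
     \<longleftrightarrow> x \<in> L \<and> S = rel_component R L x"
    (is "?maximal \<longleftrightarrow> _")
proof
  assume ?maximal
  then have "S \<subseteq> L" "rel_connected R S"
    and maximal: "\<And>T. S \<subseteq> T \<Longrightarrow> T \<subseteq> L \<Longrightarrow> rel_connected R T \<Longrightarrow> T = S"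
    by blast+
  have "x \<in> L"
    using \<open>S \<subseteq> L\<close> \<open>x \<in> S\<close> by blast
  have "S \<subseteq> rel_component R L x"
    using \<open>rel_connected R S\<close> \<open>S \<subseteq> L\<close> \<open>x \<in> S\<close> by (rule rel_connected_subset_rel_component)
  then have "rel_component R L x = S"
    using rel_component_subset[OF \<open>x \<in> L\<close>] rel_connected_rel_component[OF sym \<open>x \<in> L\<close>]
    by (rule maximal)
  with \<open>x \<in> L\<close> show "x \<in> L \<and> S = rel_component R L x"
    by simp
next
  assume "x \<in> L \<and> S = rel_component R L x"
  then have "x \<in> L" and S: "S = rel_component R L x"
    by simp_all
  have "T = S" if "S \<subseteq> T" "T \<subseteq> L" "rel_connected R T" for T
  proof -
    have "x \<in> T"
      using that(1) \<open>x \<in> S\<close> by (rule subsetD)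
    with that(3,2) have "T \<subseteq> S"
      unfolding S by (rule rel_connected_subset_rel_component)
    with that(1) show "T = S"
      by (rule subset_antisym[rotated])
  qed
  moreover have "S \<subseteq> L"
    unfolding S using \<open>x \<in> L\<close> by (rule rel_component_subset)
  moreover have "rel_connected R S"
    unfolding S by (rule rel_connected_rel_component[OF sym \<open>x \<in> L\<close>])
  ultimately show ?maximal
    by simp
qed

section \<open>The graph metric\<close>

lemma gdist_eq_Least:
  assumes "x \<in> V"
  shows "gdist V E x y = (LEAST n. \<exists>xs. rtrancl_path (induced E V) x xs y \<and> length xs = n)"
  unfolding gdist_def using ex_walk_iff_rtrancl_path[OF assms, where P = "\<lambda>l. l = Suc _"] by simp

lemma gdist_le_length:
  "x \<in> V \<Longrightarrow> rtrancl_path (induced E V) x xs y \<Longrightarrow> gdist V E x y \<le> length xs"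
  by (auto simp: gdist_eq_Least intro: Least_le)

locale conn_graph =
  fixes V :: "'a set" and E :: "'a \<Rightarrow> 'a \<Rightarrow> bool"
  assumes graph: "graph V E" and connected: "connected_graph V E"
begin

lemma edge_in_V: "E x y \<Longrightarrow> x \<in> V \<and> y \<in> V"
  using graph by (simp add: graph_def)

lemma edge_sym: "E x y \<Longrightarrow> E y x"
  using graph by (simp add: graph_def)

lemma symp_induced: "symp (induced E X)"
  by (auto intro: sympI simp: induced_def edge_sym)

lemma shortest_path:
  assumes "x \<in> V" "y \<in> V"
  obtains xs where "rtrancl_path (induced E V) x xs y" "length xs = gdist V E x y"
proof -
  let ?has_path = "\<lambda>n. \<exists>xs. rtrancl_path (induced E V) x xs y \<and> length xs = n"
  have "\<exists>p. walk V E p \<and> hd p = x \<and> last p = y"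
    using connected assms by (simp add: connected_graph_def)
  then have "\<exists>n. ?has_path n"
    using ex_walk_iff_rtrancl_path[OF \<open>x \<in> V\<close>, where P = "\<lambda>_. True"] by simp
  then have "?has_path (LEAST n. ?has_path n)"
    by (rule LeastI_ex)
  then show ?thesis
    using that unfolding gdist_eq_Least[OF \<open>x \<in> V\<close>] by blast
qed

lemma gdist_sym: "x \<in> V \<Longrightarrow> y \<in> V \<Longrightarrow> gdist V E x y = gdist V E y x"
  by (metis shortest_path gdist_le_length rtrancl_path_sym[OF symp_induced] le_antisym)

lemma gdist_triangle:
  assumes "x \<in> V" "y \<in> V" "z \<in> V"
  shows "gdist V E x z \<le> gdist V E x y + gdist V E y z"
proof -
  obtain xs ys where "rtrancl_path (induced E V) x xs y" "length xs = gdist V E x y"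
    and "rtrancl_path (induced E V) y ys z" "length ys = gdist V E y z"
    using shortest_path assms by metis
  then show ?thesis
    using gdist_le_length[OF \<open>x \<in> V\<close> rtrancl_path_trans] by fastforce
qed

lemma gdist_edge: "E x y \<Longrightarrow> gdist V E x y \<le> 1"
  using gdist_le_length[of x V E "[y]" y] edge_in_V by (simp add: induced_def)

lemma gdist_self: "x \<in> V \<Longrightarrow> gdist V E x x = 0"
  using gdist_le_length[of x V E "[]" x] by simp

lemma gdist_le_2_cases:
  assumes "x \<in> V" "y \<in> V" "gdist V E x y \<le> 2"
  shows "x = y \<or> E x y \<or> (\<exists>m. E x m \<and> E m y)"
proof -
  obtain xs where "rtrancl_path (induced E V) x xs y" "length xs \<le> 2"
    using shortest_path assms by metis
  then show ?thesis
    by (cases xs; cases "tl xs") (auto simp: induced_def)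
qed

end

section \<open>Skeletons\<close>

locale rooted_skeleton = conn_graph +
  fixes x0 :: 'a and lam k :: real
  assumes root_in_V: "x0 \<in> V" and lam_pos: "lam > 0"
begin

abbreviation "SV \<equiv> skel_V V E x0 lam k"
abbreviation "SE \<equiv> skel_E V E x0 lam k"
abbreviation "k_close \<equiv> \<lambda>a b. real (gdist V E a b) \<le> k"

definition layer_of :: "'a \<Rightarrow> int" where
  "layer_of x = \<lceil>real (gdist V E x x0) / lam\<rceil> - 1"

definition block_of :: "'a \<Rightarrow> 'a set" where
  "block_of x = rel_component k_close (layer V E x0 lam (layer_of x)) x"

lemma mem_layer_iff: "x \<in> layer V E x0 lam N \<longleftrightarrow> x \<in> V \<and> N = layer_of x"
proof -
  have "N = layer_of x \<longleftrightarrow> \<lceil>real (gdist V E x x0) / lam\<rceil> = N + 1"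
    by (auto simp: layer_of_def)
  also have "\<dots> \<longleftrightarrow> real_of_int N * lam < real (gdist V E x x0) \<and>
      real (gdist V E x x0) \<le> (real_of_int N + 1) * lam"
    using lam_pos by (simp add: ceiling_eq_iff pos_less_divide_eq pos_divide_le_eq)
  finally show ?thesis
    by (auto simp: layer_def)
qed

lemma k_close_sym_on_layer:
  "a \<in> layer V E x0 lam N \<Longrightarrow> b \<in> layer V E x0 lam N \<Longrightarrow> k_close a b \<Longrightarrow> k_close b a"
  by (simp add: mem_layer_iff gdist_sym)

lemma is_block_iff:
  assumes "x \<in> S"
  shows "is_block V E x0 lam k S \<longleftrightarrow> x \<in> V \<and> S = block_of x"
proof -
  have "\<And>N. S \<subseteq> layer V E x0 lam N \<and> rel_connected k_close S \<and>
      (\<forall>T. S \<subseteq> T \<and> T \<subseteq> layer V E x0 lam N \<and> rel_connected k_close T \<longrightarrow> T = S) \<longleftrightarrow>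
      x \<in> layer V E x0 lam N \<and> S = rel_component k_close (layer V E x0 lam N) x"
    by (rule maximal_rel_connected_iff[OF k_close_sym_on_layer \<open>x \<in> S\<close>])
  with \<open>x \<in> S\<close> show ?thesis
    unfolding is_block_def k_connected_iff_rel_connected
    by (auto simp: mem_layer_iff block_of_def)
qed

lemma block_of_self: "x \<in> block_of x"
  by (simp add: block_of_def rel_component_def)

lemma block_of_subset: "x \<in> V \<Longrightarrow> block_of x \<subseteq> V"
  using rel_component_subset[of x "layer V E x0 lam (layer_of x)" k_close]
  by (auto simp: block_of_def mem_layer_iff)

lemma skel_V_eq: "SV = block_of ` V"
proof
  show "SV \<subseteq> block_of ` V"
  proof
    fix S assume "S \<in> SV"
    then obtain x where "x \<in> S"
      by (auto simp: skel_V_def is_block_def)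
    with \<open>S \<in> SV\<close> show "S \<in> block_of ` V"
      using is_block_iff by (auto simp: skel_V_def)
  qed
  show "block_of ` V \<subseteq> SV"
    using is_block_iff block_of_self by (auto simp: skel_V_def)
qed

lemma skel_vertex_subset_V: "S \<in> SV \<Longrightarrow> S \<subseteq> V"
  using skel_V_eq block_of_subset by auto

lemma skel_vertex_nonempty: "S \<in> SV \<Longrightarrow> S \<noteq> {}"
  using skel_V_eq block_of_self by auto

lemma skel_vertex_eq_block_of: "S \<in> SV \<Longrightarrow> x \<in> S \<Longrightarrow> S = block_of x"
  using is_block_iff by (simp add: skel_V_def)

lemma block_of_eqI:
  assumes "x \<in> V" "y \<in> V" "layer_of x = layer_of y" "k_close x y"
  shows "block_of y = block_of x"
proof -
  have "induced k_close (layer V E x0 lam (layer_of x)) x y"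
    using assms by (simp add: induced_def mem_layer_iff)
  then have "y \<in> block_of x"
    by (simp add: block_of_def rel_component_def)
  moreover have "block_of x \<in> SV"
    using skel_V_eq \<open>x \<in> V\<close> by blast
  ultimately show ?thesis
    using skel_vertex_eq_block_of by metis
qed

lemma edge_block_of:
  assumes "E a b"
  shows "block_of a = block_of b \<or> SE (block_of a) (block_of b)"
  using assms edge_in_V[OF assms] block_of_self unfolding skel_E_def skel_V_eq by blast

lemma graph_skel: "graph SV SE"
  using edge_sym unfolding graph_def skel_E_def by blast

lemma connected_skel: "connected_graph SV SE"
  unfolding connected_graph_def
proof (intro conjI ballI)
  show "SV \<noteq> {}"
    using root_in_V skel_V_eq by blast
next
  fix S T assume "S \<in> SV" "T \<in> SV"
  then obtain x y where "x \<in> V" "y \<in> V" and S: "S = block_of x" and T: "T = block_of y"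
    unfolding skel_V_eq by blast
  then have "(induced E V)\<^sup>*\<^sup>* x y"
    using connected ex_walk_iff_rtranclp by (metis connected_graph_def)
  then have "(induced SE SV)\<^sup>*\<^sup>* (block_of x) (block_of y)"
  proof (induction rule: rtranclp_induct)
    case (step z w)
    then have "block_of z = block_of w \<or> SE (block_of z) (block_of w)"
      by (simp add: edge_block_of induced_def)
    then have "(induced SE SV)\<^sup>*\<^sup>* (block_of z) (block_of w)"
    proof
      assume "SE (block_of z) (block_of w)"
      then have "induced SE SV (block_of z) (block_of w)"
        by (simp add: induced_def skel_E_def)
      then show ?thesis
        by (rule r_into_rtranclp)
    qed simp
    with step.IH show ?case
      by (rule rtranclp_trans)
  qed simp
  then show "\<exists>p. walk SV SE p \<and> hd p = S \<and> last p = T"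
    using ex_walk_iff_rtranclp \<open>S \<in> SV\<close> S T by metis
qed

lemma skel_root_eq: "skel_root V E x0 lam k = block_of x0"
  unfolding skel_root_def
proof (rule the_equality)
  show "block_of x0 \<in> SV \<and> x0 \<in> block_of x0"
    using root_in_V skel_V_eq block_of_self by blast
qed (use skel_vertex_eq_block_of in blast)

end

section \<open>The (2,2)-skeleton\<close>

lemma layer_index_two_of_three:
  fixes L0 L1 L2 d0 d1 d2 :: int
  assumes "2 * L0 < d0" "d0 \<le> 2 * L0 + 2" "2 * L1 < d1" "d1 \<le> 2 * L1 + 2"
    and "2 * L2 < d2" "d2 \<le> 2 * L2 + 2" and "\<bar>d0 - d1\<bar> \<le> 1" "\<bar>d1 - d2\<bar> \<le> 1"
  shows "L0 = L1 \<or> L1 = L2 \<or> L0 = L2"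
  using assms by arith

locale two_skeleton = conn_graph +
  fixes x0 :: 'a
  assumes root: "x0 \<in> V"

sublocale two_skeleton \<subseteq> rooted_skeleton V E x0 2 2
  by unfold_locales (use root in auto)

context two_skeleton
begin

lemma layer_of_bounds:
  assumes "x \<in> V"
  shows "2 * layer_of x < int (gdist V E x x0) \<and> int (gdist V E x x0) \<le> 2 * layer_of x + 2"
proof -
  have "x \<in> layer V E x0 2 (layer_of x)"
    using assms by (simp add: mem_layer_iff)
  then have "real_of_int (2 * layer_of x) < real_of_int (int (gdist V E x x0))"
    "real_of_int (int (gdist V E x x0)) \<le> real_of_int (2 * layer_of x + 2)"
    by (simp_all add: layer_def algebra_simps)
  then show ?thesis
    by (simp only: of_int_less_iff of_int_le_iff)
qed

text \<open>Layers have width 2 and the distance to the root changes by at most 1 along an edge, so two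
  of the three vertices share a layer; being at distance at most 2, they then share a block.\<close>

lemma three_consecutive_blocks:
  assumes "E a0 a1" "E a1 a2"
  shows "block_of a0 = block_of a1 \<or> block_of a1 = block_of a2 \<or> block_of a0 = block_of a2"
proof -
  have V: "a0 \<in> V" "a1 \<in> V" "a2 \<in> V"
    using assms edge_in_V by blast+
  have d01: "gdist V E a0 a1 \<le> 1" "gdist V E a1 a0 \<le> 1"
    and d12: "gdist V E a1 a2 \<le> 1" "gdist V E a2 a1 \<le> 1"
    using gdist_edge assms edge_sym by blast+
  then have d02: "gdist V E a0 a2 \<le> 2"
    using gdist_triangle[OF V] by linarith
  have "\<bar>int (gdist V E a0 x0) - int (gdist V E a1 x0)\<bar> \<le> 1"
    "\<bar>int (gdist V E a1 x0) - int (gdist V E a2 x0)\<bar> \<le> 1"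
    using d01 d12 gdist_triangle[OF V(1,2) root] gdist_triangle[OF V(2,1) root]
      gdist_triangle[OF V(2,3) root] gdist_triangle[OF V(3,2) root] by linarith+
  then have "layer_of a0 = layer_of a1 \<or> layer_of a1 = layer_of a2 \<or> layer_of a0 = layer_of a2"
    using layer_index_two_of_three layer_of_bounds[OF V(1)] layer_of_bounds[OF V(2)]
      layer_of_bounds[OF V(3)] by blast
  moreover have "k_close a0 a1" "k_close a1 a2" "k_close a0 a2"
    using d01(1) d12(1) d02 by simp_all
  ultimately show ?thesis
    using block_of_eqI[OF V(1,2)] block_of_eqI[OF V(2,3)] block_of_eqI[OF V(1,3)] by metis
qed

lemma skel_path_of_edge:
  assumes "E a b"
  shows "\<exists>ys. rtrancl_path (induced SE SV) (block_of a) ys (block_of b) \<and> length ys \<le> 1"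
proof (cases "block_of a = block_of b")
  case True
  then show ?thesis
    by (intro exI[of _ "[]"]) simp
next
  case False
  then have "SE (block_of a) (block_of b)"
    using edge_block_of[OF assms] by simp
  then show ?thesis
    by (intro exI[of _ "[block_of b]"]) (simp add: induced_def skel_E_def)
qed

lemma skel_path_of_path:
  "rtrancl_path (induced E V) a xs b \<Longrightarrow>
    \<exists>ys. rtrancl_path (induced SE SV) (block_of a) ys (block_of b) \<and> 2 * length ys \<le> length xs + 1"
proof (induction xs arbitrary: a rule: induct_list012)
  case 1
  then show ?case
    by (intro exI[of _ "[]"]) simp
next
  case (2 x)
  then have "E a b"
    by (auto simp: induced_def)
  then show ?case
    using skel_path_of_edge by fastforce
next
  case (3 x y zs)
  then have "rtrancl_path (induced E V) y zs b"
    by simp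
  then obtain ys where ys: "rtrancl_path (induced SE SV) (block_of y) ys (block_of b)"
    "2 * length ys \<le> length zs + 1"
    using "3.IH"(1) by blast
  from "3.prems" have "E a x" "E x y"
    by (auto simp: induced_def)
  have "\<exists>us. rtrancl_path (induced SE SV) (block_of a) us (block_of y) \<and> length us \<le> 1"
    using three_consecutive_blocks[OF \<open>E a x\<close> \<open>E x y\<close>]
      skel_path_of_edge[OF \<open>E a x\<close>] skel_path_of_edge[OF \<open>E x y\<close>]
    by (auto intro: exI[of _ "[]"])
  then obtain us where "rtrancl_path (induced SE SV) (block_of a) us (block_of y)" "length us \<le> 1"
    by blast
  with ys show ?case
    by (intro exI[of _ "us @ ys"]) (auto intro: rtrancl_path_trans)
qed

lemma gdist_skel_le:
  assumes "a \<in> V" "b \<in> V"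
  shows "2 * gdist SV SE (block_of a) (block_of b) \<le> gdist V E a b + 1"
proof -
  obtain xs where "rtrancl_path (induced E V) a xs b" "length xs = gdist V E a b"
    using shortest_path assms by metis
  then obtain ys where "rtrancl_path (induced SE SV) (block_of a) ys (block_of b)"
    "2 * length ys \<le> gdist V E a b + 1"
    using skel_path_of_path by metis
  moreover have "block_of a \<in> SV"
    using skel_V_eq assms by blast
  ultimately show ?thesis
    using gdist_le_length by fastforce
qed

end

section \<open>Lifting fat minors from the (2,2)-skeleton\<close>

definition closed_nbhd :: "('a \<Rightarrow> 'a \<Rightarrow> bool) \<Rightarrow> 'a set \<Rightarrow> 'a set" where
  "closed_nbhd E Y = {x. \<exists>y\<in>Y. x = y \<or> E y x}"

lemma subset_closed_nbhd: "Y \<subseteq> closed_nbhd E Y"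
  by (auto simp: closed_nbhd_def)

lemma rtranclp_closed_nbhd:
  assumes "x \<in> closed_nbhd E Y"
  obtains a where "a \<in> Y" "(induced E (closed_nbhd E Y))\<^sup>*\<^sup>* a x"
proof -
  obtain a where "a \<in> Y" "x = a \<or> E a x"
    using assms by (auto simp: closed_nbhd_def)
  moreover have "a \<in> closed_nbhd E Y"
    using \<open>a \<in> Y\<close> subset_closed_nbhd[of Y E] by blast
  ultimately have "(induced E (closed_nbhd E Y))\<^sup>*\<^sup>* a x"
    using assms by (metis induced_def r_into_rtranclp rtranclp.rtrancl_refl)
  with \<open>a \<in> Y\<close> show ?thesis
    by (rule that)
qed

lemma r_disjoint_mono:
  "r_disjoint V E r X Y \<Longrightarrow> X' \<subseteq> X \<Longrightarrow> Y' \<subseteq> Y \<Longrightarrow> r_disjoint V E r X' Y'"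
  unfolding r_disjoint_def by blast

context conn_graph
begin

lemma closed_nbhd_subset_V: "Y \<subseteq> V \<Longrightarrow> closed_nbhd E Y \<subseteq> V"
  by (auto simp: closed_nbhd_def dest: edge_in_V)

lemma closed_nbhd_gdist:
  assumes "x \<in> closed_nbhd E Y" "Y \<subseteq> V"
  obtains a where "a \<in> Y" "gdist V E a x \<le> 1" "gdist V E x a \<le> 1"
  using assms gdist_self gdist_edge edge_sym by (force simp: closed_nbhd_def)

end

context two_skeleton
begin

lemma block_rtranclp_in_closed_nbhd:
  assumes "S \<in> SV" "S \<subseteq> Y" "a \<in> S" "b \<in> S"
  shows "(induced E (closed_nbhd E Y))\<^sup>*\<^sup>* a b"
proof -
  let ?N = "closed_nbhd E Y"
  have "k_connected V E 2 S"
    using assms(1) by (auto simp: skel_V_def is_block_def)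
  then have "(induced k_close S)\<^sup>*\<^sup>* a b"
    using assms(3,4) by (simp add: k_connected_iff_rel_connected rel_connected_def)
  then show ?thesis
  proof (induction rule: rtranclp_induct)
    case (step y z)
    then have "y \<in> S" "z \<in> S" "gdist V E y z \<le> 2"
      by (simp_all add: induced_def)
    moreover have "y \<in> V" "z \<in> V"
      using \<open>y \<in> S\<close> \<open>z \<in> S\<close> skel_vertex_subset_V[OF assms(1)] by blast+
    ultimately consider "y = z" | "E y z" | m where "E y m" "E m z"
      using gdist_le_2_cases by metis
    then have "(induced E ?N)\<^sup>*\<^sup>* y z"
    proof cases
      case 2
      have "y \<in> ?N" "z \<in> ?N"
        using \<open>y \<in> S\<close> \<open>z \<in> S\<close> assms(2) by (auto simp: closed_nbhd_def)
      with 2 have "induced E ?N y z"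
        by (simp add: induced_def)
      then show ?thesis
        by (rule r_into_rtranclp)
    next
      case (3 m)
      have "y \<in> ?N" "z \<in> ?N" "m \<in> ?N"
        using \<open>y \<in> S\<close> \<open>z \<in> S\<close> \<open>E y m\<close> assms(2) by (auto simp: closed_nbhd_def)
      with 3 have "induced E ?N y m" "induced E ?N m z"
        by (simp_all add: induced_def)
      then show ?thesis
        by (meson r_into_rtranclp rtranclp_trans)
    qed simp
    with step.IH show ?case
      by (rule rtranclp_trans)
  qed simp
qed

lemma skel_rtranclp_in_closed_nbhd:
  assumes "Z \<subseteq> SV" "(induced SE Z)\<^sup>*\<^sup>* A B" "A \<in> Z" "a \<in> A" "b \<in> B"
  shows "(induced E (closed_nbhd E (\<Union>Z)))\<^sup>*\<^sup>* a b"
  using assms(2,5)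
proof (induction arbitrary: b rule: rtranclp_induct)
  case base
  show ?case
    using block_rtranclp_in_closed_nbhd assms(1,3,4) base by blast
next
  case (step B C)
  then obtain x y where "x \<in> B" "y \<in> C" "E x y" "B \<in> Z" "C \<in> Z"
    by (auto simp: induced_def skel_E_def)
  have "x \<in> \<Union>Z" "y \<in> \<Union>Z"
    using \<open>x \<in> B\<close> \<open>y \<in> C\<close> \<open>B \<in> Z\<close> \<open>C \<in> Z\<close> by blast+
  then have "induced E (closed_nbhd E (\<Union>Z)) x y"
    using \<open>E x y\<close> subset_closed_nbhd[of "\<Union>Z" E] by (auto simp: induced_def)
  moreover have "(induced E (closed_nbhd E (\<Union>Z)))\<^sup>*\<^sup>* y b"
    using block_rtranclp_in_closed_nbhd assms(1) \<open>C \<in> Z\<close> \<open>y \<in> C\<close> step.prems by blast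
  ultimately show ?case
    using step.IH[OF \<open>x \<in> B\<close>] by (meson converse_rtranclp_into_rtranclp rtranclp_trans)
qed

lemma connected_closed_nbhd:
  assumes "Z \<subseteq> SV" "connected_graph Z SE"
  shows "connected_graph (closed_nbhd E (\<Union>Z)) E"
  unfolding connected_graph_def
proof (intro conjI ballI)
  let ?N = "closed_nbhd E (\<Union>Z)"
  obtain A where "A \<in> Z"
    using assms(2) by (auto simp: connected_graph_def)
  then have "A \<noteq> {}"
    using assms(1) skel_vertex_nonempty by blast
  with \<open>A \<in> Z\<close> have "\<Union>Z \<noteq> {}"
    by blast
  then show "?N \<noteq> {}"
    using subset_closed_nbhd[of "\<Union>Z" E] by blast
  fix x y assume "x \<in> ?N" "y \<in> ?N"
  then obtain a b where "a \<in> \<Union>Z" "(induced E ?N)\<^sup>*\<^sup>* a x" "b \<in> \<Union>Z" "(induced E ?N)\<^sup>*\<^sup>* b y"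
    by (meson rtranclp_closed_nbhd)
  then obtain A B where "A \<in> Z" "a \<in> A" "B \<in> Z" "b \<in> B"
    by blast
  have "\<exists>p. walk Z SE p \<and> hd p = A \<and> last p = B"
    using assms(2) \<open>A \<in> Z\<close> \<open>B \<in> Z\<close> unfolding connected_graph_def by blast
  then have "(induced SE Z)\<^sup>*\<^sup>* A B"
    using ex_walk_iff_rtranclp[OF \<open>A \<in> Z\<close>] by simp
  then have "(induced E ?N)\<^sup>*\<^sup>* a b"
    by (rule skel_rtranclp_in_closed_nbhd[OF assms(1) _ \<open>A \<in> Z\<close> \<open>a \<in> A\<close> \<open>b \<in> B\<close>])
  moreover have "(induced E ?N)\<^sup>*\<^sup>* x a"
    using \<open>(induced E ?N)\<^sup>*\<^sup>* a x\<close> by (rule sympD[OF symp_rtranclp[OF symp_induced]])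
  ultimately have "(induced E ?N)\<^sup>*\<^sup>* x y"
    using \<open>(induced E ?N)\<^sup>*\<^sup>* b y\<close> by (meson rtranclp_trans)
  then show "\<exists>p. walk ?N E p \<and> hd p = x \<and> last p = y"
    using ex_walk_iff_rtranclp[OF \<open>x \<in> ?N\<close>] by simp
qed

lemma walk_lift:
  assumes "walk SV SE W" "hd W \<in> X" "last W \<in> Y"
  obtains p where "walk V E p" "distinct p"
    "hd p \<in> closed_nbhd E (\<Union>X)" "last p \<in> closed_nbhd E (\<Union>Y)"
    "set p \<subseteq> closed_nbhd E (\<Union>(set W))"
proof -
  let ?N = "closed_nbhd E (\<Union>(set W))"
  have "set W \<subseteq> SV" "hd W \<in> set W" "last W \<in> set W"
    using assms(1) by (auto simp: walk_def)
  then obtain a b where "a \<in> hd W" "b \<in> last W"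
    using skel_vertex_nonempty by blast
  have "walk (set W) SE W"
    using assms(1) by (simp add: walk_def)
  then have "(induced SE (set W))\<^sup>*\<^sup>* (hd W) (last W)"
    using ex_walk_iff_rtranclp[OF \<open>hd W \<in> set W\<close>] by blast
  then have "(induced E ?N)\<^sup>*\<^sup>* a b"
    by (rule skel_rtranclp_in_closed_nbhd[OF \<open>set W \<subseteq> SV\<close> _ \<open>hd W \<in> set W\<close> \<open>a \<in> hd W\<close> \<open>b \<in> last W\<close>])
  then obtain xs0 where "rtrancl_path (induced E ?N) a xs0 b"
    by (auto simp: rtranclp_eq_rtrancl_path)
  then obtain xs where xs: "rtrancl_path (induced E ?N) a xs b" "distinct (a # xs)"
    by (rule rtrancl_path_distinct)
  have "a \<in> ?N"
    using \<open>a \<in> hd W\<close> \<open>hd W \<in> set W\<close> subset_closed_nbhd[of "\<Union>(set W)" E] by blast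
  with xs(1) have "walk ?N E (a # xs)" "last (a # xs) = b"
    using walk_iff_rtrancl_path[of ?N E a xs b] by blast+
  moreover have "?N \<subseteq> V"
    using closed_nbhd_subset_V skel_vertex_subset_V \<open>set W \<subseteq> SV\<close> by blast
  moreover have "a \<in> closed_nbhd E (\<Union>X)" "b \<in> closed_nbhd E (\<Union>Y)"
    using \<open>a \<in> hd W\<close> \<open>b \<in> last W\<close> assms(2,3)
      subset_closed_nbhd[of "\<Union>X" E] subset_closed_nbhd[of "\<Union>Y" E] by blast+
  ultimately show ?thesis
    using that[of "a # xs"] xs(2) by (auto simp: walk_def)
qed

lemma lift_minor_paths:
  assumes "\<forall>e\<in>EH. walk SV SE (P' e) \<and> (\<exists>u v. e = {u, v} \<and> hd (P' e) \<in> B' u \<and> last (P' e) \<in> B' v)"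
  shows "\<exists>P. \<forall>e\<in>EH. walk V E (P e) \<and> distinct (P e) \<and>
    (\<exists>u v. e = {u, v} \<and> hd (P e) \<in> closed_nbhd E (\<Union>(B' u)) \<and> last (P e) \<in> closed_nbhd E (\<Union>(B' v))) \<and>
    set (P e) \<subseteq> closed_nbhd E (\<Union>(set (P' e)))"
proof (rule bchoice, rule ballI)
  fix e assume "e \<in> EH"
  then obtain u v where "e = {u, v}" "walk SV SE (P' e)" "hd (P' e) \<in> B' u" "last (P' e) \<in> B' v"
    using assms by blast
  moreover from this(2-4) obtain p where "walk V E p" "distinct p"
    "hd p \<in> closed_nbhd E (\<Union>(B' u))" "last p \<in> closed_nbhd E (\<Union>(B' v))"
    "set p \<subseteq> closed_nbhd E (\<Union>(set (P' e)))"
    by (rule walk_lift)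
  ultimately show "\<exists>p. walk V E p \<and> distinct p \<and>
      (\<exists>u v. e = {u, v} \<and> hd p \<in> closed_nbhd E (\<Union>(B' u)) \<and> last p \<in> closed_nbhd E (\<Union>(B' v))) \<and>
      set p \<subseteq> closed_nbhd E (\<Union>(set (P' e)))"
    by blast
qed

lemma r_disjoint_closed_nbhd:
  assumes "M \<ge> 4" "Z1 \<subseteq> SV" "Z2 \<subseteq> SV" "r_disjoint SV SE M Z1 Z2"
  shows "r_disjoint V E (M + 1) (closed_nbhd E (\<Union>Z1)) (closed_nbhd E (\<Union>Z2))"
  unfolding r_disjoint_def
proof (intro ballI)
  fix x y assume x: "x \<in> closed_nbhd E (\<Union>Z1)" and y: "y \<in> closed_nbhd E (\<Union>Z2)"
  have "\<Union>Z1 \<subseteq> V" "\<Union>Z2 \<subseteq> V"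
    using assms(2,3) skel_vertex_subset_V by blast+
  then have "x \<in> V" "y \<in> V"
    using x y closed_nbhd_subset_V by blast+
  obtain a b where "a \<in> \<Union>Z1" "gdist V E a x \<le> 1" and "b \<in> \<Union>Z2" "gdist V E y b \<le> 1"
    using closed_nbhd_gdist[OF x \<open>\<Union>Z1 \<subseteq> V\<close>] closed_nbhd_gdist[OF y \<open>\<Union>Z2 \<subseteq> V\<close>] by metis
  then obtain A B where "A \<in> Z1" "a \<in> A" "B \<in> Z2" "b \<in> B"
    by blast
  have "a \<in> V" "b \<in> V"
    using \<open>a \<in> \<Union>Z1\<close> \<open>b \<in> \<Union>Z2\<close> \<open>\<Union>Z1 \<subseteq> V\<close> \<open>\<Union>Z2 \<subseteq> V\<close> by blast+
  have "A = block_of a" "B = block_of b"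
    using assms(2,3) \<open>A \<in> Z1\<close> \<open>a \<in> A\<close> \<open>B \<in> Z2\<close> \<open>b \<in> B\<close> skel_vertex_eq_block_of by blast+
  have "M < real (gdist SV SE A B)"
    using assms(4) \<open>A \<in> Z1\<close> \<open>B \<in> Z2\<close> by (simp add: r_disjoint_def)
  moreover have "2 * gdist SV SE A B \<le> gdist V E a b + 1"
    unfolding \<open>A = block_of a\<close> \<open>B = block_of b\<close> using \<open>a \<in> V\<close> \<open>b \<in> V\<close> by (rule gdist_skel_le)
  moreover have "gdist V E a b \<le> gdist V E a x + gdist V E x b"
    "gdist V E x b \<le> gdist V E x y + gdist V E y b"
    using gdist_triangle \<open>a \<in> V\<close> \<open>b \<in> V\<close> \<open>x \<in> V\<close> \<open>y \<in> V\<close> by blast+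
  \<comment> \<open>d(x, y) \<ge> d(a, b) - 2 \<ge> 2 d'(A, B) - 3 > 2M - 3 \<ge> M + 1\<close>
  ultimately show "M + 1 < real (gdist V E x y)"
    using \<open>gdist V E a x \<le> 1\<close> \<open>gdist V E y b \<le> 1\<close> \<open>M \<ge> 4\<close> by linarith
qed

lemma fat_minor_of_skeleton:
  assumes "M \<ge> 4" and "fat_minor SV SE M VH EH"
  shows "fat_minor V E (M + 1) VH EH"
proof -
  from assms(2) obtain B' :: "'b \<Rightarrow> 'a set set" and P' where
    B': "\<forall>v\<in>VH. B' v \<subseteq> SV \<and> connected_graph (B' v) SE" and
    P': "\<forall>e\<in>EH. walk SV SE (P' e) \<and> distinct (P' e) \<and>
        (\<exists>u v. e = {u, v} \<and> hd (P' e) \<in> B' u \<and> last (P' e) \<in> B' v)" and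
    BB': "\<forall>u\<in>VH. \<forall>v\<in>VH. u \<noteq> v \<longrightarrow> r_disjoint SV SE M (B' u) (B' v)" and
    PP': "\<forall>e\<in>EH. \<forall>e'\<in>EH. e \<noteq> e' \<longrightarrow> r_disjoint SV SE M (set (P' e)) (set (P' e'))" and
    BP': "\<forall>v\<in>VH. \<forall>e\<in>EH. v \<notin> e \<longrightarrow> r_disjoint SV SE M (B' v) (set (P' e))"
    unfolding fat_minor_def by (elim exE conjE)
  define B where "B v = closed_nbhd E (\<Union>(B' v))" for v
  define Q where "Q e = closed_nbhd E (\<Union>(set (P' e)))" for e
  have "\<forall>e\<in>EH. walk SV SE (P' e) \<and> (\<exists>u v. e = {u, v} \<and> hd (P' e) \<in> B' u \<and> last (P' e) \<in> B' v)"
    using P' by blast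
  from lift_minor_paths[OF this] obtain P where P: "\<forall>e\<in>EH. walk V E (P e) \<and> distinct (P e) \<and>
      (\<exists>u v. e = {u, v} \<and> hd (P e) \<in> B u \<and> last (P e) \<in> B v) \<and> set (P e) \<subseteq> Q e"
    unfolding B_def Q_def by (elim exE)
  have P'_SV: "set (P' e) \<subseteq> SV" if "e \<in> EH" for e
    using P' that by (simp add: walk_def)
  show ?thesis
    unfolding fat_minor_def
  proof (intro exI[of _ B] exI[of _ P] conjI ballI impI)
    fix v assume "v \<in> VH"
    then have "B' v \<subseteq> SV" "connected_graph (B' v) SE"
      using B' by simp_all
    then have "\<Union>(B' v) \<subseteq> V"
      using skel_vertex_subset_V by blast
    then show "B v \<subseteq> V"
      unfolding B_def by (rule closed_nbhd_subset_V)
    show "connected_graph (B v) E"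
      unfolding B_def using \<open>B' v \<subseteq> SV\<close> \<open>connected_graph (B' v) SE\<close> by (rule connected_closed_nbhd)
  next
    fix e assume "e \<in> EH"
    then show "walk V E (P e)" "distinct (P e)"
      "\<exists>u v. e = {u, v} \<and> hd (P e) \<in> B u \<and> last (P e) \<in> B v"
      using P by simp_all
  next
    fix u v assume "u \<in> VH" "v \<in> VH" "u \<noteq> v"
    then show "r_disjoint V E (M + 1) (B u) (B v)"
      unfolding B_def using B' BB' by (simp add: r_disjoint_closed_nbhd[OF assms(1)])
  next
    fix e e' assume "e \<in> EH" "e' \<in> EH" "e \<noteq> e'"
    then have "r_disjoint V E (M + 1) (Q e) (Q e')"
      unfolding Q_def using PP' P'_SV by (simp add: r_disjoint_closed_nbhd[OF assms(1)])
    then show "r_disjoint V E (M + 1) (set (P e)) (set (P e'))"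
      by (rule r_disjoint_mono) (use P \<open>e \<in> EH\<close> \<open>e' \<in> EH\<close> in simp_all)
  next
    fix v e assume "v \<in> VH" "e \<in> EH" "v \<notin> e"
    then have "r_disjoint V E (M + 1) (B v) (Q e)"
      unfolding B_def Q_def using B' BP' P'_SV by (simp add: r_disjoint_closed_nbhd[OF assms(1)])
    then show "r_disjoint V E (M + 1) (B v) (set (P e))"
      by (rule r_disjoint_mono) (use P \<open>e \<in> EH\<close> in simp_all)
  qed
qed

end

theorem corollary10:
  fixes V :: "'a set" and E :: "'a \<Rightarrow> 'a \<Rightarrow> bool" and x0 :: 'a
    and lam k M :: real and VH :: "'b set" and EH :: "'b set set"
  assumes "graph V E" and "connected_graph V E" and "unbounded_graph V E x0" and "x0 \<in> V"
    and "lam \<ge> 1" and "k \<ge> 1" and "M \<ge> 6"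
    and "simple_graph_sets VH EH"
    and "fat_minor
           (skel_V (skel_V V E x0 lam k) (skel_E V E x0 lam k) (skel_root V E x0 lam k) 2 2)
           (skel_E (skel_V V E x0 lam k) (skel_E V E x0 lam k) (skel_root V E x0 lam k) 2 2)
           M VH EH"
  shows "fat_minor (skel_V V E x0 lam k) (skel_E V E x0 lam k) (M + 1) VH EH"
proof -
  interpret G: rooted_skeleton V E x0 lam k
    using assms(1,2,4,5) by unfold_locales auto
  interpret G2: two_skeleton "skel_V V E x0 lam k" "skel_E V E x0 lam k" "skel_root V E x0 lam k"
    using G.graph_skel G.connected_skel G.skel_root_eq G.skel_V_eq assms(4)
    by unfold_locales auto
  show ?thesis
    by (rule G2.fat_minor_of_skeleton[OF _ assms(9)]) (use assms(7) in linarith)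
qed

end
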